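(* Let $k,r,p>0$ be integers and let $F:\mathbb{N}^k\to\mathbb{N}^r$ be any function. Then there exists $E\subseteq\mathbb{N}$ with $|E|=p$ such that $F$ has at most $k^k\,p$ regressive values on $E^k$.
   Context: $\mathbb{N}=\{0,1,2,\dots\}$. For $x\in\mathbb{N}^k$, $\min(x)$ is the minimum coordinate and $|x|$ the maximum coordinate of $x$. For $B\subseteq\mathbb{N}^k$ and a function $F$ defined on $B$ with values in $\mathbb{N}^r$, an element $y$ is a regressive value of $F$ on $B$ iff there exists $x\in B$ with $F(x)=y$ and $|y|<\min(x)$. *)

theory Defs
  imports Main
begin

text \<open>Elements of N^k are represented as lists of naturals of length k.
  min(x) is the minimum coordinate, |x| the maximum coordinate.\<close>

definition minc :: "nat list \<Rightarrow> nat" where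
  "minc x = Min (set x)"

definition maxc :: "nat list \<Rightarrow> nat" where
  "maxc x = Max (set x)"

definition cube :: "nat set \<Rightarrow> nat \<Rightarrow> nat list set" where
  "cube E k = {x. length x = k \<and> set x \<subseteq> E}"

definition regressive_values :: "(nat list \<Rightarrow> nat list) \<Rightarrow> nat list set \<Rightarrow> nat list set" where
  "regressive_values F B = {y. \<exists>x\<in>B. F x = y \<and> maxc y < minc x}"

end

theory Submission
  imports Defs "HOL-Library.Ramsey"
begin

text \<open>Choose the elements \<open>a\<^sub>1 < \<dots> < a\<^sub>p\<close> of \<open>E\<close> one at a time, keeping an infinite
  reservoir \<open>Z\<close> above them, so that for every \<open>x\<close> in \<open>(E \<union> Z)\<^sup>k\<close> whose minimum lies
  in \<open>E\<close>, whether \<open>F x\<close> is regressive, and if so its value, depends only on \<open>min x\<close> and the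
  order pattern of \<open>x\<close>. For a new minimum \<open>a\<close> and a fixed pattern, \<open>x\<close> is determined by
  the set of its entries other than \<open>a\<close>, a subset of \<open>Z\<close> of fixed size, and a regressive
  value is a vector of length \<open>r\<close> with entries below \<open>a\<close>: finitely many colours, so
  Ramsey's theorem shrinks \<open>Z\<close> to make the colouring constant, once for each of the
  finitely many patterns. On \<open>E\<^sup>k\<close> the regressive values are then indexed by pattern and
  minimum, which leaves at most \<open>k\<^sup>k p\<close> of them.\<close>

lemma Ramsey_finite_colours:
  assumes "infinite Z" "finite C" "f ` [Z]\<^bsup>n\<^esup> \<subseteq> C"
  obtains Y t where "Y \<subseteq> Z" "infinite Y" "f ` [Y]\<^bsup>n\<^esup> \<subseteq> {t}"
proof -
  obtain h where h: "bij_betw h C {..<card C}"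
    using ex_bij_betw_finite_nat[OF assms(2)] atLeast0LessThan by metis
  have "h ` f ` [Z]\<^bsup>n\<^esup> \<subseteq> {..<card C}"
    using assms(3) bij_betw_imp_surj_on[OF h] by (metis image_mono)
  then obtain Y t where Y: "Y \<subseteq> Z" "infinite Y" "(h \<circ> f) ` [Y]\<^bsup>n\<^esup> \<subseteq> {t}"
    using Ramsey_nsets[OF assms(1), of "h \<circ> f"] by (metis image_comp)
  have "f X = inv_into C h t" if "X \<in> [Y]\<^bsup>n\<^esup>" for X
  proof -
    have "f X \<in> C" using that assms(3) nsets_mono[OF Y(1)] by blast
    moreover have "h (f X) = t" using that Y(3) by auto
    ultimately show ?thesis using bij_betw_imp_inj_on[OF h] by (metis inv_into_f_f)
  qed
  then show thesis using that[OF Y(1,2)] by blast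
qed

lemma infinite_subset_for_all:
  assumes "finite Q" "infinite Z"
    and "\<And>q Y. q \<in> Q \<Longrightarrow> Y \<subseteq> Z \<Longrightarrow> infinite Y \<Longrightarrow> \<exists>Y'\<subseteq>Y. infinite Y' \<and> P q Y'"
    and "\<And>q Y Y'. q \<in> Q \<Longrightarrow> P q Y \<Longrightarrow> Y' \<subseteq> Y \<Longrightarrow> P q Y'"
  shows "\<exists>Y\<subseteq>Z. infinite Y \<and> (\<forall>q\<in>Q. P q Y)"
  using assms(1,3,4)
proof (induction Q rule: finite_induct)
  case empty
  show ?case using assms(2) by auto
next
  case (insert q Q)
  have "\<exists>Y\<subseteq>Z. infinite Y \<and> (\<forall>q\<in>Q. P q Y)"
    using insert.prems by (intro insert.IH) blast+
  then obtain Y where Y: "Y \<subseteq> Z" "infinite Y" "\<forall>q\<in>Q. P q Y"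
    by blast
  moreover obtain Y' where "Y' \<subseteq> Y" "infinite Y'" "P q Y'"
    using insert.prems(1)[OF insertI1 Y(1,2)] by blast
  moreover have "\<forall>q\<in>Q. P q Y'"
    using Y(3) insert.prems(2) \<open>Y' \<subseteq> Y\<close> by blast
  ultimately show ?case by blast
qed

lemma card_image_le_if_factors:
  assumes "finite G" "g ` B \<subseteq> G"
    and "\<And>x x'. x \<in> B \<Longrightarrow> x' \<in> B \<Longrightarrow> g x = g x' \<Longrightarrow> f x = f x'"
  shows "finite (f ` B)" "card (f ` B) \<le> card G"
proof -
  define h where "h c = f (SOME x. x \<in> B \<and> g x = c)" for c
  have "h (g x) = f x" if "x \<in> B" for x
    unfolding h_def by (rule someI2[of _ x]) (auto intro: assms(3) simp: that)
  then have sub: "f ` B \<subseteq> h ` G" using assms(2) by force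
  then show "finite (f ` B)" using assms(1) by (meson finite_imageI finite_subset)
  have "card (f ` B) \<le> card (h ` G)" using sub assms(1) by (simp add: card_mono)
  also have "\<dots> \<le> card G" by (rule card_image_le[OF assms(1)])
  finally show "card (f ` B) \<le> card G" .
qed

lemma cube_mono: "E \<subseteq> E' \<Longrightarrow> cube E k \<subseteq> cube E' k"
  by (auto simp: cube_def)

lemma minc_in_set: "x \<noteq> [] \<Longrightarrow> minc x \<in> set x"
  by (simp add: minc_def)

lemma minc_le: "v \<in> set x \<Longrightarrow> minc x \<le> v"
  by (simp add: minc_def)

lemma cube_above_minc: "x \<in> cube E k \<Longrightarrow> x \<in> cube {v\<in>E. minc x \<le> v} k"
  by (auto simp: cube_def minc_le)

lemma set_less_if_maxc_less: "maxc y < a \<Longrightarrow> set y \<subseteq> {..<a}"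
  by (cases "y = []") (auto simp: maxc_def)

definition rank_in :: "'a::linorder set \<Rightarrow> 'a \<Rightarrow> nat" where
  "rank_in S v = card {u\<in>S. u < v}"

definition pattern :: "'a::linorder list \<Rightarrow> nat list" where
  "pattern x = map (rank_in (set x)) x"

definition realize :: "nat list \<Rightarrow> 'a::linorder set \<Rightarrow> 'a list" where
  "realize q S = map (inv_into S (rank_in S)) q"

definition patterns :: "nat \<Rightarrow> nat list set" where
  "patterns k = {q. length q = k \<and> set q \<subseteq> {..<k}}"

lemma strict_mono_on_rank_in: "finite S \<Longrightarrow> strict_mono_on S (rank_in S)"
  unfolding rank_in_def
  by (rule strict_mono_onI, rule psubset_card_mono) auto

lemma inj_on_rank_in: "finite S \<Longrightarrow> inj_on (rank_in S) S"
  by (rule strict_mono_on_imp_inj_on[OF strict_mono_on_rank_in])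

lemma rank_in_less_card: "finite S \<Longrightarrow> v \<in> S \<Longrightarrow> rank_in S v < card S"
  unfolding rank_in_def by (rule psubset_card_mono) auto

lemma realize_pattern: "realize (pattern x) (set x) = x"
  by (simp add: realize_def pattern_def inj_on_rank_in map_idI)

lemma card_set_pattern: "card (set (pattern x)) = card (set x)"
  by (simp add: pattern_def card_image inj_on_rank_in)

lemma pattern_in_patterns: "pattern x \<in> patterns (length x)"
  using rank_in_less_card[of "set x"] card_length[of x]
  by (fastforce simp: patterns_def pattern_def)

lemma finite_patterns: "finite (patterns k)"
  using finite_lists_length_eq[of "{..<k}" k] by (simp add: patterns_def conj_commute)

lemma card_patterns: "card (patterns k) = k ^ k"
  using card_lists_length_eq[of "{..<k}" k] by (simp add: patterns_def conj_commute)

definition regressive_value :: "(nat list \<Rightarrow> nat list) \<Rightarrow> nat list \<Rightarrow> nat list option" where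
  "regressive_value F x = (if maxc (F x) < minc x then Some (F x) else None)"

lemma regressive_values_subset: "regressive_values F B \<subseteq> the ` regressive_value F ` B"
  by (force simp: regressive_values_def regressive_value_def)

definition canonical_on :: "(nat list \<Rightarrow> nat list) \<Rightarrow> nat \<Rightarrow> nat set \<Rightarrow> nat set \<Rightarrow> bool" where
  "canonical_on F k A Z \<longleftrightarrow> (\<forall>x\<in>cube (A \<union> Z) k. \<forall>x'\<in>cube (A \<union> Z) k.
     minc x \<in> A \<and> minc x' = minc x \<and> pattern x' = pattern x \<longrightarrow>
     regressive_value F x' = regressive_value F x)"

lemma homogeneous_for_pattern:
  assumes "infinite Z" "k > 0" "length q = k" "\<forall>x. length x = k \<longrightarrow> length (F x) = r"
  shows "\<exists>Y\<subseteq>Z. infinite Y \<and> (\<forall>x\<in>cube (insert a Y) k. \<forall>x'\<in>cube (insert a Y) k.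
           minc x = a \<and> minc x' = a \<and> pattern x = q \<and> pattern x' = q \<longrightarrow>
           regressive_value F x' = regressive_value F x)"
proof -
  define j where "j = card (set q) - 1"
  \<comment> \<open>Thresholding at \<open>a\<close> rather than at the minimum of the realized tuple keeps the
    colours finitely many; the two agree on the tuples that matter, whose minimum is \<open>a\<close>.\<close>
  define colour where "colour T =
    (let y = F (realize q (insert a T)) in if maxc y < a then Some y else None)" for T
  define C where "C = insert None (Some ` {y. set y \<subseteq> {..<a} \<and> length y = r})"
  have "finite C"
    using finite_lists_length_eq[of "{..<a}" r] by (simp add: C_def)
  moreover have "colour T \<in> C" for T
    using assms(3,4) set_less_if_maxc_less[of "F (realize q (insert a T))"]
    by (simp add: C_def colour_def realize_def Let_def)
  ultimately obtain Y t where Y: "Y \<subseteq> Z" "infinite Y" "colour ` [Y]\<^bsup>j\<^esup> \<subseteq> {t}"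
    using Ramsey_finite_colours[OF assms(1)] by (metis image_subsetI)
  have "regressive_value F x = t"
    if "x \<in> cube (insert a Y) k" "minc x = a" "pattern x = q" for x
  proof -
    have "a \<in> set x" using that(1,2) assms(2) minc_in_set by (force simp: cube_def)
    have "card (set x - {a}) = j"
      using \<open>a \<in> set x\<close> card_set_pattern[of x] that(3) by (simp add: j_def)
    moreover have "set x \<subseteq> insert a Y"
      using that(1) by (simp add: cube_def)
    ultimately have "set x - {a} \<in> [Y]\<^bsup>j\<^esup>"
      by (simp add: nsets_def Diff_subset_conv)
    then have "colour (set x - {a}) = t"
      using Y(3) by blast
    moreover have "colour (set x - {a}) = regressive_value F x"
      using \<open>a \<in> set x\<close> that(2,3) realize_pattern[of x]
      by (simp add: colour_def regressive_value_def insert_absorb)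
    ultimately show ?thesis by simp
  qed
  then show ?thesis using Y(1,2) by blast
qed

lemma canonical_on_insert:
  assumes "canonical_on F k A Z" "infinite Z" "a \<in> Z" "\<forall>b\<in>A. b < a"
    and "k > 0" "\<forall>x. length x = k \<longrightarrow> length (F x) = r"
  obtains Z' where "Z' \<subseteq> {z\<in>Z. a < z}" "infinite Z'" "canonical_on F k (insert a A) Z'"
proof -
  let ?hom = "\<lambda>q Y. \<forall>x\<in>cube (insert a Y) k. \<forall>x'\<in>cube (insert a Y) k.
    minc x = a \<and> minc x' = a \<and> pattern x = q \<and> pattern x' = q \<longrightarrow>
    regressive_value F x' = regressive_value F x"
  have "{z\<in>Z. a < z} = Z - {..a}" by auto
  then have "infinite {z\<in>Z. a < z}" using assms(2) by simp
  then have "\<exists>Y\<subseteq>{z\<in>Z. a < z}. infinite Y \<and> (\<forall>q\<in>patterns k. ?hom q Y)"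
  proof (rule infinite_subset_for_all[OF finite_patterns])
    fix q and Y :: "nat set"
    assume "q \<in> patterns k" "infinite Y"
    then show "\<exists>Y'\<subseteq>Y. infinite Y' \<and> ?hom q Y'"
      using homogeneous_for_pattern[OF _ assms(5) _ assms(6)] by (simp add: patterns_def)
  next
    fix q and Y Y' :: "nat set"
    assume "?hom q Y" "Y' \<subseteq> Y"
    then show "?hom q Y'"
      using cube_mono[of "insert a Y'" "insert a Y" k] by blast
  qed
  then obtain Z' where Z': "Z' \<subseteq> {z\<in>Z. a < z}" "infinite Z'" "\<forall>q\<in>patterns k. ?hom q Z'"
    by blast
  have "canonical_on F k (insert a A) Z'"
    unfolding canonical_on_def
  proof (intro ballI impI)
    fix x x'
    assume x: "x \<in> cube (insert a A \<union> Z') k" "x' \<in> cube (insert a A \<union> Z') k"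
      and same: "minc x \<in> insert a A \<and> minc x' = minc x \<and> pattern x' = pattern x"
    consider "minc x \<in> A" | "minc x = a" using same by blast
    then show "regressive_value F x' = regressive_value F x"
    proof cases
      case 1
      have "cube (insert a A \<union> Z') k \<subseteq> cube (A \<union> Z) k"
        using Z'(1) assms(3) by (intro cube_mono) auto
      then show ?thesis using assms(1) x same 1 unfolding canonical_on_def by blast
    next
      case 2
      have "{v \<in> insert a A \<union> Z'. a \<le> v} \<subseteq> insert a Z'"
        using assms(4) by force
      then have "x \<in> cube (insert a Z') k" "x' \<in> cube (insert a Z') k"
        using cube_above_minc[OF x(1)] cube_above_minc[OF x(2)] cube_mono 2 same by (metis subsetD)+
      moreover have "pattern x \<in> patterns k"
        using x(1) pattern_in_patterns[of x] by (simp add: cube_def)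
      ultimately show ?thesis using Z'(3) 2 same by metis
    qed
  qed
  then show thesis using that Z'(1,2) by blast
qed

lemma canonical_on_exists:
  assumes "k > 0" "\<forall>x. length x = k \<longrightarrow> length (F x) = r"
  shows "\<exists>A Z. finite A \<and> card A = n \<and> infinite Z \<and> (\<forall>b\<in>A. \<forall>z\<in>Z. b < z) \<and>
           canonical_on F k A Z"
proof (induction n)
  case 0
  have "canonical_on F k {} UNIV"
    by (simp only: canonical_on_def empty_iff simp_thms Ball_def)
  then show ?case
    using infinite_UNIV_nat by (intro exI[of _ "{}"] exI[of _ UNIV]) simp
next
  case (Suc n)
  then obtain A Z where AZ: "finite A" "card A = n" "infinite Z" "\<forall>b\<in>A. \<forall>z\<in>Z. b < z"
    "canonical_on F k A Z" by blast
  then obtain a where "a \<in> Z" using infinite_imp_nonempty by blast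
  then obtain Z' where Z': "Z' \<subseteq> {z\<in>Z. a < z}" "infinite Z'" "canonical_on F k (insert a A) Z'"
    using canonical_on_insert[OF AZ(5,3) _ _ assms] AZ(4) by metis
  have "a \<notin> A" using AZ(4) \<open>a \<in> Z\<close> by blast
  then have "finite (insert a A) \<and> card (insert a A) = Suc n \<and> (\<forall>b\<in>insert a A. \<forall>z\<in>Z'. b < z)"
    using AZ(1,2,4) Z'(1) by auto
  then show ?case using Z'(2,3) by blast
qed

lemma card_regressive_values_le:
  assumes "canonical_on F k A Z" "finite A" "k > 0"
  shows "finite (regressive_values F (cube A k))"
    and "card (regressive_values F (cube A k)) \<le> k ^ k * card A"
proof -
  have minc_in: "minc x \<in> A" if "x \<in> cube A k" for x
    using that assms(3) minc_in_set[of x] by (force simp: cube_def)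
  have "(pattern x, minc x) \<in> patterns k \<times> A" if "x \<in> cube A k" for x
    using pattern_in_patterns[of x] minc_in[OF that] that by (simp add: cube_def)
  then have index: "(\<lambda>x. (pattern x, minc x)) ` cube A k \<subseteq> patterns k \<times> A"
    by (rule image_subsetI)
  have factors: "regressive_value F x = regressive_value F x'"
    if "x \<in> cube A k" "x' \<in> cube A k" "(pattern x, minc x) = (pattern x', minc x')" for x x'
  proof -
    have "cube A k \<subseteq> cube (A \<union> Z) k" by (rule cube_mono) simp
    moreover have "minc x = minc x'" "pattern x = pattern x'" using that(3) by simp_all
    ultimately show ?thesis
      using assms(1)[unfolded canonical_on_def, rule_format, of x' x] that(1,2) minc_in[OF that(2)]
      by blast
  qed
  note image_bounds = card_image_le_if_factors[OF finite_cartesian_product[OF finite_patterns assms(2)]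
      index factors]
  have "finite (the ` regressive_value F ` cube A k)"
    using image_bounds(1) by (rule finite_imageI)
  then show "finite (regressive_values F (cube A k))"
    by (rule finite_subset[OF regressive_values_subset])
  have "card (regressive_values F (cube A k)) \<le> card (the ` regressive_value F ` cube A k)"
    by (rule card_mono[OF \<open>finite (the ` _)\<close> regressive_values_subset])
  also have "\<dots> \<le> card (regressive_value F ` cube A k)"
    by (rule card_image_le[OF image_bounds(1)])
  also have "\<dots> \<le> card (patterns k \<times> A)"
    using image_bounds(2) .
  finally show "card (regressive_values F (cube A k)) \<le> k ^ k * card A"
    by (simp add: card_cartesian_product card_patterns)
qed

theorem theorem0p2:
  fixes k r p :: nat and F :: "nat list \<Rightarrow> nat list"
  assumes "k > 0" and "r > 0" and "p > 0"
    and "\<forall>x. length x = k \<longrightarrow> length (F x) = r"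
  shows "\<exists>E :: nat set. finite E \<and> card E = p \<and>
           finite (regressive_values F (cube E k)) \<and>
           card (regressive_values F (cube E k)) \<le> k ^ k * p"
proof -
  obtain A Z where A: "finite A" "card A = p" "canonical_on F k A Z"
    using canonical_on_exists[OF assms(1,4)] by blast
  then show ?thesis
    using card_regressive_values_le[OF A(3,1) assms(1)] by blast
qed

end
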